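(* Let $X$ be as in the standing setting with skeleton $X_1,\dots,X_k$, where the elements of $X_i$ are scaled (by positive factors) so that $\sum_{e\in X_i}e=0$. Suppose some $x\in X$ lies in no $\operatorname{span}X_l$ and $x\in\operatorname{pos}\{x_i,x_j\}$ with $x_i\in X_i$, $x_j\in X_j$, $i\ne j$. Then every $y\in X\cap\operatorname{span}X_i$ is a positive multiple of $\sum_{e\in S_y}e$. Moreover, for any $p,q\in X\cap\operatorname{span}X_i$, the supports $S_p,S_q$ are either disjoint or one is a subset of the other.
   Context: Standing setting: $X\subset\mathbb R^n\setminus\{0\}$ is a finite set such that $0$ lies in the interior of $\operatorname{conv}X$, no element of $X$ is a positive multiple of another, and every $n+1$ points of $X$ are in good position; elements of $X$ represent directions, so each may be replaced by a positive multiple without affecting these hypotheses. A finite set $A$ is in conical position if $0\notin\operatorname{conv}A$ and no point of $A$ lies in the positive hull (set of nonnegative linear combinations, denoted $\operatorname{pos}$) of the other points; it is in good position otherwise. A skeleton of $X$ is a collection of pairwise disjoint subsets $X_1,\dots,X_k\subseteq X$ such that each $X_i$ is the vertex set of a simplex whose relative interior contains $0$ and $\mathbb R^n=\operatorname{span}X_1\oplus\cdots\oplus\operatorname{span}X_k$. For a nonzero $y\in\operatorname{span}X_i$, its support $S_y$ is the minimal subset of $X_i$ whose positive hull contains $y$. *)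

theory Defs
  imports "HOL-Analysis.Analysis"
begin

text \<open>Positive hull: the set of nonnegative linear combinations (= smallest convex cone
  containing S; note pos {} = {0}).\<close>
abbreviation pos :: "'a::real_vector set \<Rightarrow> 'a set" where
  "pos S \<equiv> convex_cone hull S"

definition conical_position :: "'a::real_vector set \<Rightarrow> bool" where
  "conical_position A \<longleftrightarrow> 0 \<notin> convex hull A \<and> (\<forall>a\<in>A. a \<notin> pos (A - {a}))"

definition good_position :: "'a::real_vector set \<Rightarrow> bool" where
  "good_position A \<longleftrightarrow> \<not> conical_position A"

definition standing :: "'a::euclidean_space set \<Rightarrow> bool" where
  "standing X \<longleftrightarrow> finite X \<and> 0 \<notin> X \<and> 0 \<in> interior (convex hull X)
     \<and> (\<forall>x\<in>X. \<forall>y\<in>X. \<forall>c::real. c > 0 \<and> y = c *\<^sub>R x \<longrightarrow> y = x)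
     \<and> (\<forall>A. A \<subseteq> X \<and> card A = DIM('a) + 1 \<longrightarrow> good_position A)"

text \<open>A skeleton X_0,...,X_{k-1} of X (indexed by i < k).\<close>
definition skeleton :: "'a::euclidean_space set \<Rightarrow> nat \<Rightarrow> (nat \<Rightarrow> 'a set) \<Rightarrow> bool" where
  "skeleton X k Xs \<longleftrightarrow>
     (\<forall>i<k. Xs i \<subseteq> X)
     \<and> (\<forall>i<k. \<forall>j<k. i \<noteq> j \<longrightarrow> Xs i \<inter> Xs j = {})
     \<and> (\<forall>i<k. \<not> affine_dependent (Xs i) \<and> 0 \<in> rel_interior (convex hull (Xs i)))
     \<and> (\<forall>v. \<exists>f. (\<forall>i<k. f i \<in> span (Xs i)) \<and> v = (\<Sum>i<k. f i))
     \<and> (\<forall>f. (\<forall>i<k. f i \<in> span (Xs i)) \<and> (\<Sum>i<k. f i) = 0 \<longrightarrow> (\<forall>i<k. f i = 0))"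

definition is_support :: "'a::real_vector set \<Rightarrow> 'a \<Rightarrow> 'a set \<Rightarrow> bool" where
  "is_support Xi y S \<longleftrightarrow> S \<subseteq> Xi \<and> y \<in> pos S \<and> (\<forall>T. T \<subset> S \<longrightarrow> y \<notin> pos T)"

end

theory Submission
  imports Defs
begin

text \<open>The vertices of the block Xs i sum to zero, so up to scaling this is their only linear
  relation. If a support of a point of X had unequal weights, or contained xi and another vertex,
  or if two supports crossed, the support relations could be solved for xi, giving a basis
  C \<subseteq> X of span (Xs i) in which xi has coordinates of both signs. Complete C by bases of the
  other blocks, one of them containing xj, and add x = \<alpha> xi + \<beta> xj with \<alpha>, \<beta> > 0: in every
  nontrivial linear relation among these n + 1 points of X two coefficients are negative, so they
  are in conical position, contradicting the standing hypothesis.\<close>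

section \<open>Positive hulls and conical position\<close>

lemma convex_cone_hull_finite:
  fixes S :: "'a::real_vector set"
  assumes "finite S"
  shows "pos S = {y. \<exists>u. (\<forall>x\<in>S. 0 \<le> u x) \<and> (\<Sum>x\<in>S. u x *\<^sub>R x) = y}"
proof (intro set_eqI iffI)
  fix y assume "y \<in> pos S"
  then consider "y = 0" | z c where "z \<in> convex hull S" "c \<ge> 0" "y = c *\<^sub>R z"
    unfolding convex_cone_hull_convex_hull by auto
  then show "y \<in> {y. \<exists>u. (\<forall>x\<in>S. 0 \<le> u x) \<and> (\<Sum>x\<in>S. u x *\<^sub>R x) = y}"
  proof cases
    case 1
    then show ?thesis by (intro CollectI exI[of _ "\<lambda>_. 0"]) auto
  next
    case 2
    then obtain u where "\<forall>x\<in>S. 0 \<le> u x" "(\<Sum>x\<in>S. u x *\<^sub>R x) = z"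
      using convex_hull_finite[OF assms] by auto
    with 2 show ?thesis
      by (intro CollectI exI[of _ "\<lambda>x. c * u x"]) (auto simp: scaleR_sum_right)
  qed
next
  fix y assume "y \<in> {y. \<exists>u. (\<forall>x\<in>S. 0 \<le> u x) \<and> (\<Sum>x\<in>S. u x *\<^sub>R x) = y}"
  then obtain u where u: "\<forall>x\<in>S. 0 \<le> u x" "(\<Sum>x\<in>S. u x *\<^sub>R x) = y" by auto
  show "y \<in> pos S"
  proof (cases "sum u S = 0")
    case True
    then have "\<forall>x\<in>S. u x = 0" using u sum_nonneg_eq_0_iff[OF assms] by blast
    then have "y = 0" using u by simp
    then show ?thesis by (simp add: convex_cone_hull_contains_0)
  next
    case False
    then have s: "sum u S > 0" using sum_nonneg[of S u] u by force
    define z where "z = (\<Sum>x\<in>S. (u x / sum u S) *\<^sub>R x)"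
    have "z \<in> convex hull S"
      unfolding convex_hull_finite[OF assms] z_def
      by (intro CollectI exI[of _ "\<lambda>x. u x / sum u S"])
        (use u s in \<open>auto simp: sum_divide_distrib[symmetric]\<close>)
    moreover have "y = sum u S *\<^sub>R z"
      using s u by (simp add: z_def scaleR_sum_right)
    ultimately show ?thesis
      using s unfolding convex_cone_hull_convex_hull by force
  qed
qed

lemma independent_relation_coeff:
  fixes B :: "'a::real_vector set"
  assumes "finite B" "independent B" "(\<Sum>a\<in>B. c a *\<^sub>R a) + (\<Sum>a\<in>B. d a *\<^sub>R a) = 0" "a \<in> B"
  shows "c a = - d a"
proof -
  have "(\<Sum>a\<in>B. (c a + d a) *\<^sub>R a) = 0"
    using assms(3) by (simp add: scaleR_add_left sum.distrib)
  then show ?thesis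
    using independentD[OF assms(2,1) order_refl _ assms(4), of "\<lambda>a. c a + d a"] by simp
qed

lemma sum_scaleR_restrict:
  fixes f :: "'a::real_vector \<Rightarrow> real"
  assumes "finite A"
  shows "(\<Sum>v\<in>A. (if v \<in> S then f v else 0) *\<^sub>R v) = (\<Sum>v\<in>A \<inter> S. f v *\<^sub>R v)"
  using sum.inter_restrict[OF assms, of "\<lambda>v. f v *\<^sub>R v" S]
  by (simp add: if_distrib[of "\<lambda>t. t *\<^sub>R _"] cong: if_cong)

lemma vertex_in_span_if_scaled_sum:
  fixes S :: "'a::real_vector set"
  assumes "finite S" "a \<in> S" "\<mu> \<noteq> 0" "\<mu> *\<^sub>R (\<Sum>e\<in>S. e) \<in> span C" "S - {a} \<subseteq> span C"
  shows "a \<in> span C"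
proof -
  have "inverse \<mu> *\<^sub>R (\<mu> *\<^sub>R (\<Sum>e\<in>S. e)) - (\<Sum>e\<in>S - {a}. e) = a"
    using assms(3) sum_diff1[OF assms(1), of "\<lambda>e. e"] assms(2) by simp
  moreover have "(\<Sum>e\<in>S - {a}. e) \<in> span C"
    using assms(5) by (intro span_sum) auto
  ultimately show ?thesis
    using span_diff[OF span_scale[OF assms(4)]] by metis
qed

text \<open>A nontrivial relation with two negative coefficients cannot be normalised into a convex
  combination of 0, nor into an expression of one point as a nonnegative combination of the others.\<close>
lemma conical_position_if_two_negative:
  fixes A :: "'a::real_vector set"
  assumes fin: "finite A"
    and neg: "\<And>c. (\<Sum>a\<in>A. c a *\<^sub>R a) = 0 \<Longrightarrow> \<exists>a\<in>A. c a \<noteq> 0 \<Longrightarrow>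
      \<exists>a\<in>A. \<exists>b\<in>A. a \<noteq> b \<and> c a < 0 \<and> c b < 0"
  shows "conical_position A"
  unfolding conical_position_def
proof (intro conjI ballI notI)
  assume "0 \<in> convex hull A"
  then obtain u where u: "\<forall>a\<in>A. 0 \<le> u a" "sum u A = 1" "(\<Sum>a\<in>A. u a *\<^sub>R a) = 0"
    using convex_hull_finite[OF fin] by auto
  have "\<exists>a\<in>A. u a \<noteq> 0"
    using u(2) by (metis sum.neutral zero_neq_one)
  then show False
    using neg[OF u(3)] u(1) by force
next
  fix a assume a: "a \<in> A" "a \<in> pos (A - {a})"
  then obtain u where u: "\<forall>b\<in>A - {a}. 0 \<le> u b" "(\<Sum>b\<in>A - {a}. u b *\<^sub>R b) = a"
    using convex_cone_hull_finite[of "A - {a}"] fin by auto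
  define c where "c b = (if b = a then -1 else u b)" for b
  have "(\<Sum>b\<in>A. c b *\<^sub>R b) = c a *\<^sub>R a + (\<Sum>b\<in>A - {a}. u b *\<^sub>R b)"
    unfolding sum.remove[OF fin a(1)] by (auto simp: c_def intro!: sum.cong)
  then have "(\<Sum>b\<in>A. c b *\<^sub>R b) = 0"
    using u by (simp add: c_def)
  moreover have "c a \<noteq> 0" by (simp add: c_def)
  ultimately obtain b where b: "b \<in> A - {a}" "c b < 0"
    using neg[of c] a(1) by (metis DiffI singletonD)
  moreover have "0 \<le> u b"
    using u(1) b(1) by blast
  ultimately show False
    using b(1) by (simp add: c_def)
qed

section \<open>Simplices with vanishing vertex sum\<close>

lemma is_support_subset: "is_support E y S \<Longrightarrow> S \<subseteq> E"
  by (simp add: is_support_def)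

locale balanced_simplex =
  fixes E :: "'a::euclidean_space set"
  assumes finite: "finite E"
    and affine_independent: "\<not> affine_dependent E"
    and sum_zero: "(\<Sum>e\<in>E. e) = 0"
begin

lemma coeffs_diff_constant:
  assumes "(\<Sum>e\<in>E. c e *\<^sub>R e) = (\<Sum>e\<in>E. d e *\<^sub>R e)" "e \<in> E" "e' \<in> E"
  shows "c e - d e = c e' - d e'"
proof -
  define m where "m = (\<Sum>e\<in>E. c e - d e) / real (card E)"
  define u where "u e = c e - d e - m" for e
  have "card E \<noteq> 0" using finite assms(2) by auto
  have "sum u E = (\<Sum>e\<in>E. c e - d e) - real (card E) * m"
    by (simp add: u_def sum_subtractf)
  also have "\<dots> = 0"
    using \<open>card E \<noteq> 0\<close> by (simp add: m_def)
  finally have "sum u E = 0" .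
  have "(\<Sum>e\<in>E. u e *\<^sub>R e)
      = (\<Sum>e\<in>E. c e *\<^sub>R e) - (\<Sum>e\<in>E. d e *\<^sub>R e) - m *\<^sub>R (\<Sum>e\<in>E. e)"
    by (simp add: u_def scaleR_diff_left sum_subtractf scaleR_sum_right)
  then have "(\<Sum>e\<in>E. u e *\<^sub>R e) = 0"
    using assms(1) sum_zero by simp
  with \<open>sum u E = 0\<close> have "\<forall>e\<in>E. u e = 0"
    using affine_independent unfolding affine_dependent_explicit_finite[OF finite] by blast
  then show ?thesis
    using assms(2,3) by (simp add: u_def)
qed

lemma span_remove: "E \<subseteq> span (E - {b})"
proof (cases "b \<in> E")
  case True
  have "- (\<Sum>e\<in>E - {b}. e) \<in> span (E - {b})"
    by (intro span_neg span_sum span_base)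
  moreover have "- (\<Sum>e\<in>E - {b}. e) = b"
    using sum.remove[OF finite True, of "\<lambda>e. e"] sum_zero by (simp add: add_eq_0_iff2)
  ultimately have "b \<in> span (E - {b})"
    by simp
  then show ?thesis
    using span_superset[of "E - {b}"] by auto
next
  case False
  then have "E - {b} = E" by simp
  then show ?thesis by (simp add: span_superset)
qed

lemma independent_remove:
  assumes "b \<in> E"
  shows "independent (E - {b})"
proof (rule independent_if_scalars_zero)
  show "finite (E - {b})" using finite by simp
  fix f e assume rel: "(\<Sum>e\<in>E - {b}. f e *\<^sub>R e) = 0" and e: "e \<in> E - {b}"
  define g where "g e = (if e = b then 0 else f e)" for e
  have "(\<Sum>e\<in>E. g e *\<^sub>R e) = g b *\<^sub>R b + (\<Sum>e\<in>E - {b}. g e *\<^sub>R e)"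
    by (rule sum.remove[OF finite assms])
  also have "\<dots> = (\<Sum>e\<in>E. 0 *\<^sub>R e)"
    using rel by (simp add: g_def)
  finally have "(\<Sum>e\<in>E. g e *\<^sub>R e) = (\<Sum>e\<in>E. 0 *\<^sub>R e)" .
  from coeffs_diff_constant[OF this, of e b] have "g e = g b"
    using e assms by simp
  then show "f e = 0"
    using e by (simp add: g_def split: if_splits)
qed

lemma dim_span_eq_card_minus_one: "dim (span E) = card E - 1"
proof (cases "E = {}")
  case False
  then obtain b where b: "b \<in> E" by blast
  have "span E = span (E - {b})"
    using span_remove[of b] span_mono[of "E - {b}" E] by (simp add: span_minimal subset_antisym)
  then show ?thesis
    using dim_span_eq_card_independent[OF independent_remove[OF b]] finite b by simp
qed (simp add: dim_span)

lemma independent_if_spanning: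
  assumes "C \<subseteq> span E" "E \<subseteq> span C" "finite C" "card C < card E"
  shows "independent C"
  using assms dim_span_eq_card_minus_one
  by (intro card_le_dim_spanning[of C "span E"]) (auto simp: span_minimal)

lemma positive_combination_notin:
  assumes S: "S \<subseteq> E" and y: "y = (\<Sum>e\<in>S. w e *\<^sub>R e)" and pos: "\<forall>e\<in>S. w e > 0"
    and s: "s \<in> S" "s \<noteq> y" and b: "b \<in> E" "b \<notin> S"
  shows "y \<notin> E"
proof
  assume yE: "y \<in> E"
  have "(\<Sum>e\<in>E. (if e \<in> S then w e else 0) *\<^sub>R e) = y"
    using y S sum_scaleR_restrict[OF finite, of S w] by (simp add: Int_absorb1)
  also have "y = (\<Sum>e\<in>E. (if e = y then 1 else 0) *\<^sub>R e)"
    using yE finite by (simp add: if_distrib[of "\<lambda>t. t *\<^sub>R _"] cong: if_cong)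
  finally have "(\<Sum>e\<in>E. (if e \<in> S then w e else 0) *\<^sub>R e)
      = (\<Sum>e\<in>E. (if e = y then 1 else 0) *\<^sub>R e)" .
  from coeffs_diff_constant[OF this, of s b]
  have "(if s \<in> S then w s else 0) - (if s = y then 1 else 0)
      = (if b \<in> S then w b else 0) - (if b = y then 1 else 0)"
    using S s(1) b(1) by blast
  then show False
    using pos s b by (auto split: if_splits)
qed

lemma scaled_face_sum_notin:
  assumes S: "S \<subseteq> E" and z: "z \<in> E" "z \<notin> S" and s: "s \<in> S" "s' \<in> S" "s \<noteq> s'"
    and "\<mu> > 0"
  shows "\<mu> *\<^sub>R (\<Sum>e\<in>S. e) \<notin> E"
proof -
  have y: "\<mu> *\<^sub>R (\<Sum>e\<in>S. e) = (\<Sum>e\<in>S. \<mu> *\<^sub>R e)"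
    by (simp add: scaleR_sum_right)
  obtain t where t: "t \<in> S" "t \<noteq> \<mu> *\<^sub>R (\<Sum>e\<in>S. e)"
    using s by blast
  show ?thesis
    by (rule positive_combination_notin[OF S y _ t z]) (use \<open>\<mu> > 0\<close> in simp)
qed

lemma scaled_face_sums_eq_imp_subset:
  assumes S: "S \<subseteq> E" and T: "T \<subseteq> E" and z: "z \<in> E" "z \<notin> S" "z \<notin> T"
    and eq: "\<mu> *\<^sub>R (\<Sum>e\<in>S. e) = \<nu> *\<^sub>R (\<Sum>e\<in>T. e)" and "\<mu> \<noteq> 0"
  shows "S \<subseteq> T"
proof
  fix a assume a: "a \<in> S"
  have "(\<Sum>e\<in>E. (if e \<in> S then \<mu> else 0) *\<^sub>R e) = (\<Sum>e\<in>E. (if e \<in> T then \<nu> else 0) *\<^sub>R e)"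
    using eq S T sum_scaleR_restrict[OF finite] by (simp add: Int_absorb1 scaleR_sum_right)
  from coeffs_diff_constant[OF this, of a z] show "a \<in> T"
    using a z S \<open>\<mu> \<noteq> 0\<close> by (auto split: if_splits)
qed

lemma support_coeffs:
  assumes "y \<noteq> 0" and "is_support E y S"
  obtains w where "\<forall>e\<in>S. w e > 0" "y = (\<Sum>e\<in>S. w e *\<^sub>R e)" "S \<noteq> E"
proof -
  have SE: "S \<subseteq> E" and yS: "y \<in> pos S" and minimal: "\<And>T. T \<subset> S \<Longrightarrow> y \<notin> pos T"
    using assms(2) by (auto simp: is_support_def)
  have finS: "finite S" using SE finite finite_subset by blast
  obtain u where u: "\<forall>e\<in>S. 0 \<le> u e" "y = (\<Sum>e\<in>S. u e *\<^sub>R e)"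
    using yS convex_cone_hull_finite[OF finS] by auto
  text \<open>A representation with a vanishing coefficient contradicts minimality; for S = E one is
    obtained by subtracting the smallest coefficient times the vanishing vertex sum.\<close>
  have drop: False if "e0 \<in> S" "\<forall>e\<in>S. 0 \<le> w e" "y = (\<Sum>e\<in>S. w e *\<^sub>R e)" "w e0 = 0" for w e0
  proof -
    have "y = (\<Sum>e\<in>S - {e0}. w e *\<^sub>R e)"
      using that sum.remove[OF finS that(1), of "\<lambda>e. w e *\<^sub>R e"] by simp
    then have "y \<in> pos (S - {e0})"
      using that(2) finS by (subst convex_cone_hull_finite) auto
    then show False
      using minimal that(1) by blast
  qed
  have "\<forall>e\<in>S. u e > 0"
    using drop[OF _ u(1) u(2)] u(1) by force
  moreover have "S \<noteq> E"
  proof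
    assume SE: "S = E"
    have "S \<noteq> {}" using assms(1) u(2) by auto
    then obtain e0 where e0: "e0 \<in> S" "u e0 = Min (u ` S)"
      using finS Min_in[of "u ` S"] by fastforce
    have "(\<Sum>e\<in>S. (u e - u e0) *\<^sub>R e) = y"
      using u(2) sum_zero SE by (simp add: scaleR_diff_left sum_subtractf scaleR_sum_right[symmetric])
    moreover have "\<forall>e\<in>S. 0 \<le> u e - u e0"
      using e0 finS by simp
    ultimately show False
      using drop[of e0 "\<lambda>e. u e - u e0"] e0(1) by simp
  qed
  ultimately show ?thesis
    using that u(2) by blast
qed

lemma vertex_expansion_in_support:
  assumes S: "S \<subseteq> E" and z: "z \<in> S" and b: "b \<notin> S"
    and y: "y = (\<Sum>e\<in>S. w e *\<^sub>R e)" and wz: "w z \<noteq> 0"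
  shows "z = inverse (w z) *\<^sub>R y
    + (\<Sum>v\<in>E - {z, b}. (- (if v \<in> S then inverse (w z) * w v else 0)) *\<^sub>R v)"
proof -
  have "y = w z *\<^sub>R z + (\<Sum>v\<in>S - {z}. w v *\<^sub>R v)"
    using y sum.remove[OF finite_subset[OF S finite] z] by simp
  moreover have "(E - {z, b}) \<inter> S = S - {z}"
    using S b by auto
  then have "(\<Sum>v\<in>E - {z, b}. (- (if v \<in> S then inverse (w z) * w v else 0)) *\<^sub>R v)
      = - (inverse (w z) *\<^sub>R (\<Sum>v\<in>S - {z}. w v *\<^sub>R v))"
    using sum_scaleR_restrict[of "E - {z, b}" S "\<lambda>v. inverse (w z) * w v"] finite
    by (simp add: sum_negf scaleR_sum_right)
  ultimately show ?thesis
    using wz by (simp add: scaleR_add_right)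
qed

lemma vertex_expansion_off_support:
  assumes S: "S \<subseteq> E" and z: "z \<in> E" "z \<notin> S" and b: "b \<in> S"
    and y: "y = (\<Sum>e\<in>S. w e *\<^sub>R e)" and wb: "w b \<noteq> 0"
  shows "z = (- inverse (w b)) *\<^sub>R y
    + (\<Sum>v\<in>E - {z, b}. ((if v \<in> S then inverse (w b) * w v else 0) - 1) *\<^sub>R v)"
proof -
  have "z \<noteq> b"
    using z b by blast
  have "y = w b *\<^sub>R b + (\<Sum>v\<in>S - {b}. w v *\<^sub>R v)"
    using y sum.remove[OF finite_subset[OF S finite] b] by simp
  moreover have "(\<Sum>v\<in>E - {z, b}. v) = - z - b"
    using sum_diff[OF finite, of "{z, b}" "\<lambda>v. v"] sum_zero z S b \<open>z \<noteq> b\<close> by auto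
  moreover have "(E - {z, b}) \<inter> S = S - {b}"
    using S z by auto
  then have "(\<Sum>v\<in>E - {z, b}. (if v \<in> S then inverse (w b) * w v else 0) *\<^sub>R v)
      = inverse (w b) *\<^sub>R (\<Sum>v\<in>S - {b}. w v *\<^sub>R v)"
    using sum_scaleR_restrict[of "E - {z, b}" S "\<lambda>v. inverse (w b) * w v"] finite
    by (simp add: scaleR_sum_right)
  ultimately show ?thesis
    using wb by (simp add: scaleR_diff_left sum_subtractf scaleR_add_right)
qed

lemma vertex_expansion_off_crossing:
  assumes Sp: "Sp \<subseteq> E" and Sq: "Sq \<subseteq> E" and z: "z \<in> E" "z \<notin> Sp" "z \<notin> Sq"
    and a: "a \<in> Sp" "a \<notin> Sq" and b: "b \<in> Sq" "b \<notin> Sp"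
  shows "z = - (\<Sum>e\<in>Sp. e) - (\<Sum>e\<in>Sq. e)
    + (\<Sum>v\<in>E - {z, a, b}. ((if v \<in> Sp then 1 else 0) + (if v \<in> Sq then 1 else 0) - 1) *\<^sub>R v)"
proof -
  let ?R = "E - {z, a, b}"
  have finR: "finite ?R"
    using finite by simp
  have "?R \<inter> Sp = Sp - {a}" "?R \<inter> Sq = Sq - {b}"
    using Sp Sq z a b by auto
  then have "(\<Sum>v\<in>?R. ((if v \<in> Sp then 1 else 0) + (if v \<in> Sq then 1 else 0) - 1) *\<^sub>R v)
      = (\<Sum>v\<in>Sp - {a}. v) + (\<Sum>v\<in>Sq - {b}. v) - (\<Sum>v\<in>?R. v)"
    using sum_scaleR_restrict[OF finR, of Sp "\<lambda>_. 1"] sum_scaleR_restrict[OF finR, of Sq "\<lambda>_. 1"]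
    by (simp add: scaleR_add_left scaleR_diff_left sum.distrib sum_subtractf)
  moreover have "(\<Sum>v\<in>?R. v) = - (z + a + b)"
  proof -
    have "z \<noteq> a" "z \<noteq> b" "a \<noteq> b" "{z, a, b} \<subseteq> E"
      using z a b Sp Sq by auto
    then show ?thesis
      using sum_diff[OF finite, of "{z, a, b}" "\<lambda>v. v"] sum_zero by (simp add: algebra_simps)
  qed
  moreover have "(\<Sum>v\<in>Sp - {a}. v) = (\<Sum>v\<in>Sp. v) - a"
    using sum_diff1[OF finite_subset[OF Sp finite], of "\<lambda>v. v"] a(1) by simp
  moreover have "(\<Sum>v\<in>Sq - {b}. v) = (\<Sum>v\<in>Sq. v) - b"
    using sum_diff1[OF finite_subset[OF Sq finite], of "\<lambda>v. v"] b(1) by simp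
  ultimately show ?thesis
    by (simp add: algebra_simps)
qed

end

section \<open>Skeletons\<close>

lemma skeleton_components_zero:
  assumes "skeleton X k Xs" "\<forall>l<k. f l \<in> span (Xs l)" "(\<Sum>l<k. f l) = 0" "l < k"
  shows "f l = 0"
  using assms unfolding skeleton_def by simp

lemma skeleton_decomposition:
  assumes "skeleton X k Xs"
  obtains f where "\<forall>l<k. f l \<in> span (Xs l)" "v = (\<Sum>l<k. f l)"
proof -
  have "\<exists>f. (\<forall>l<k. f l \<in> span (Xs l)) \<and> v = (\<Sum>l<k. f l)"
    using assms unfolding skeleton_def by blast
  then show thesis
    using that by blast
qed

lemma skeleton_span_inter:
  assumes "skeleton X k Xs" "l < k" "l' < k" "l \<noteq> l'" "v \<in> span (Xs l)" "v \<in> span (Xs l')"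
  shows "v = 0"
proof -
  define f where "f m = (if m = l then v else 0) + (if m = l' then -v else 0)" for m
  have "\<forall>m<k. f m \<in> span (Xs m)"
    using assms by (auto simp: f_def span_neg span_zero)
  moreover have "(\<Sum>m<k. f m) = 0"
    using assms by (simp add: f_def sum.distrib)
  ultimately have "f l = 0"
    using skeleton_components_zero assms(1,2) by blast
  then show ?thesis
    using assms(4) by (simp add: f_def)
qed

lemma skeleton_block_relation:
  assumes sk: "skeleton X k Xs"
    and T: "\<And>l. l < k \<Longrightarrow> T l \<subseteq> span (Xs l) \<and> independent (T l)"
    and g: "\<And>l. l < k \<Longrightarrow> g l \<in> span (Xs l)"
    and rel: "(\<Sum>a\<in>(\<Union>l<k. T l). c a *\<^sub>R a) + (\<Sum>l<k. g l) = 0"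
    and l: "l < k"
  shows "(\<Sum>a\<in>T l. c a *\<^sub>R a) + g l = 0"
proof -
  have fin: "finite (T l)" if "l < k" for l
    using T[OF that] independent_imp_finite by blast
  have disj: "T l \<inter> T l' = {}" if "l < k" "l' < k" "l \<noteq> l'" for l l'
  proof -
    have "T l \<inter> T l' \<subseteq> {0}"
      using skeleton_span_inter[OF sk that] T[OF that(1)] T[OF that(2)] by blast
    moreover have "0 \<notin> T l"
      using T[OF that(1)] dependent_zero by blast
    ultimately show ?thesis by blast
  qed
  define f where "f l = (\<Sum>a\<in>T l. c a *\<^sub>R a) + g l" for l
  have "\<forall>l<k. f l \<in> span (Xs l)"
  proof (intro allI impI)
    fix l assume "l < k"
    then have "(\<Sum>a\<in>T l. c a *\<^sub>R a) \<in> span (Xs l)"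
      using T by (intro span_sum span_scale) auto
    then show "f l \<in> span (Xs l)"
      unfolding f_def using g[OF \<open>l < k\<close>] by (rule span_add)
  qed
  moreover have "(\<Sum>l<k. f l) = 0"
  proof -
    have "(\<Sum>a\<in>(\<Union>l<k. T l). c a *\<^sub>R a) = (\<Sum>l<k. \<Sum>a\<in>T l. c a *\<^sub>R a)"
      by (rule sum.UNION_disjoint) (use fin disj in auto)
    then show ?thesis
      using rel by (simp add: f_def sum.distrib)
  qed
  ultimately have "f l = 0"
    by (rule skeleton_components_zero[OF sk _ _ l])
  then show ?thesis
    by (simp add: f_def)
qed

lemma skeleton_union_basis:
  fixes Xs :: "nat \<Rightarrow> 'a::euclidean_space set"
  assumes sk: "skeleton X k Xs"
    and T: "\<And>l. l < k \<Longrightarrow> T l \<subseteq> span (Xs l) \<and> independent (T l) \<and> Xs l \<subseteq> span (T l)"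
  shows "independent (\<Union>l<k. T l)" "card (\<Union>l<k. T l) = DIM('a)"
proof -
  let ?D = "\<Union>l<k. T l"
  have fin: "finite ?D"
    using T independent_imp_finite by blast
  show indep: "independent ?D"
  proof (rule independent_if_scalars_zero[OF fin])
    fix c a assume rel: "(\<Sum>a\<in>?D. c a *\<^sub>R a) = 0" and a: "a \<in> ?D"
    then obtain l where l: "l < k" "a \<in> T l" by blast
    have "(\<Sum>a\<in>T l. c a *\<^sub>R a) + 0 = 0"
      by (rule skeleton_block_relation[OF sk _ _ _ l(1), where g = "\<lambda>_. 0"]) (use T rel span_zero in auto)
    then show "c a = 0"
      using independentD[OF _ _ order_refl] T[OF l(1)] independent_imp_finite l(2) by auto
  qed
  have "UNIV \<subseteq> span ?D"
  proof
    fix v :: 'a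
    obtain f where f: "\<forall>l<k. f l \<in> span (Xs l)" "v = (\<Sum>l<k. f l)"
      using skeleton_decomposition[OF sk] by blast
    have "span (Xs l) \<subseteq> span ?D" if "l < k" for l
    proof -
      have "span (Xs l) \<subseteq> span (T l)"
        using T[OF that] by (simp add: span_minimal)
      also have "\<dots> \<subseteq> span ?D"
        using that by (intro span_mono) auto
      finally show ?thesis .
    qed
    then show "v \<in> span ?D"
      using f by (auto intro: span_sum)
  qed
  then show "card ?D = DIM('a)"
    using basis_card_eq_dim[of ?D UNIV] indep by simp
qed

section \<open>A direction bridging two blocks\<close>

locale bridged_skeleton =
  fixes X :: "'a::euclidean_space set" and k :: nat and Xs :: "nat \<Rightarrow> 'a set"
    and x xi xj :: 'a and i j :: nat
  assumes standing: "standing X" and skeleton: "skeleton X k Xs"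
    and sum_zero: "\<forall>l<k. (\<Sum>e\<in>Xs l. e) = 0"
    and x_in_X: "x \<in> X" and x_notin_span: "\<forall>l<k. x \<notin> span (Xs l)"
    and i: "i < k" and j: "j < k" and i_neq_j: "i \<noteq> j"
    and xi: "xi \<in> Xs i" and xj: "xj \<in> Xs j" and x_pos: "x \<in> pos {xi, xj}"
begin

lemma finite_X: "finite X"
  using standing by (simp add: standing_def)

lemma zero_notin_X: "0 \<notin> X"
  using standing by (simp add: standing_def)

lemma Xs_subset: "l < k \<Longrightarrow> Xs l \<subseteq> X"
  using skeleton by (simp add: skeleton_def)

sublocale simplex_i: balanced_simplex "Xs i"
proof
  show "finite (Xs i)"
    using finite_subset[OF Xs_subset[OF i] finite_X] .
  show "\<not> affine_dependent (Xs i)"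
    using skeleton i by (simp add: skeleton_def)
  show "(\<Sum>e\<in>Xs i. e) = 0"
    using sum_zero i by blast
qed

lemma x_combination:
  obtains \<alpha> \<beta> where "\<alpha> > 0" "\<beta> > 0" "x = \<alpha> *\<^sub>R xi + \<beta> *\<^sub>R xj"
proof -
  have "xi \<noteq> xj"
    using skeleton i j i_neq_j xi xj unfolding skeleton_def by blast
  moreover obtain u where u: "\<forall>z\<in>{xi, xj}. 0 \<le> u z" "(\<Sum>z\<in>{xi, xj}. u z *\<^sub>R z) = x"
    using x_pos convex_cone_hull_finite[of "{xi, xj}"] by auto
  ultimately have x: "x = u xi *\<^sub>R xi + u xj *\<^sub>R xj"
    by simp
  have "u xi \<noteq> 0"
  proof
    assume "u xi = 0"
    then have "x \<in> span (Xs j)"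
      using x xj by (simp add: span_scale span_base)
    then show False
      using x_notin_span j by blast
  qed
  moreover have "u xj \<noteq> 0"
  proof
    assume "u xj = 0"
    then have "x \<in> span (Xs i)"
      using x xi by (simp add: span_scale span_base)
    then show False
      using x_notin_span i by blast
  qed
  ultimately show ?thesis
    using that[OF _ _ x] u(1) by force
qed

lemma xj_notin_span_i: "xj \<notin> span (Xs i)"
proof
  assume "xj \<in> span (Xs i)"
  then have "xj = 0"
    using skeleton_span_inter[OF skeleton i j i_neq_j] span_base[OF xj] by blast
  then show False
    using xj Xs_subset[OF j] zero_notin_X by blast
qed

lemma relation_blocks:
  assumes T: "\<And>l. l < k \<Longrightarrow> T l \<subseteq> span (Xs l) \<and> independent (T l)"
    and x: "x = \<alpha> *\<^sub>R xi + \<beta> *\<^sub>R xj"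
    and rel: "(\<Sum>a\<in>insert x (\<Union>l<k. T l). c a *\<^sub>R a) = 0"
    and m: "m < k"
  shows "(\<Sum>a\<in>T m. c a *\<^sub>R a)
    + ((if m = i then (c x * \<alpha>) *\<^sub>R xi else 0) + (if m = j then (c x * \<beta>) *\<^sub>R xj else 0)) = 0"
proof -
  define g where "g l = (if l = i then (c x * \<alpha>) *\<^sub>R xi else 0)
    + (if l = j then (c x * \<beta>) *\<^sub>R xj else 0)" for l
  have "finite (\<Union>l<k. T l)"
    using T independent_imp_finite by blast
  moreover have "x \<notin> (\<Union>l<k. T l)"
    using T x_notin_span by blast
  moreover have "(\<Sum>l<k. g l) = c x *\<^sub>R x"
    using i j x by (simp add: g_def sum.distrib scaleR_add_right)
  ultimately have sum_rel: "(\<Sum>a\<in>(\<Union>l<k. T l). c a *\<^sub>R a) + (\<Sum>l<k. g l) = 0"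
    using rel by (simp add: add.commute)
  have g_span: "g l \<in> span (Xs l)" for l
    unfolding g_def using xi xj by (intro span_add) (auto intro: span_scale span_base span_zero)
  have "(\<Sum>a\<in>T m. c a *\<^sub>R a) + g m = 0"
    by (rule skeleton_block_relation[OF skeleton _ g_span sum_rel m]) (fact T)
  then show ?thesis
    by (simp add: g_def)
qed

lemma relation_coeffs:
  assumes T: "\<And>l. l < k \<Longrightarrow> T l \<subseteq> span (Xs l) \<and> independent (T l)"
    and C: "T i = C" and xj_in: "xj \<in> T j" and u: "xi = (\<Sum>v\<in>C. u v *\<^sub>R v)"
    and x: "x = \<alpha> *\<^sub>R xi + \<beta> *\<^sub>R xj"
    and rel: "(\<Sum>a\<in>insert x (\<Union>l<k. T l). c a *\<^sub>R a) = 0"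
    and nontrivial: "\<exists>a\<in>insert x (\<Union>l<k. T l). c a \<noteq> 0"
  shows "c x \<noteq> 0" "\<And>v. v \<in> C \<Longrightarrow> c v = - (c x * \<alpha> * u v)" "c xj = - (c x * \<beta>)"
proof -
  have block: "(\<Sum>a\<in>T l. c a *\<^sub>R a)
    + ((if l = i then (c x * \<alpha>) *\<^sub>R xi else 0) + (if l = j then (c x * \<beta>) *\<^sub>R xj else 0)) = 0"
    if "l < k" for l
    by (rule relation_blocks[OF _ x rel that]) (fact T)
  have fin: "finite (T l)" if "l < k" for l
    using T[OF that] independent_imp_finite by blast
  show "c x \<noteq> 0"
  proof
    assume "c x = 0"
    have "c a = 0" if "l < k" "a \<in> T l" for l a
    proof -
      have "(if l = i then (c x * \<alpha>) *\<^sub>R xi else 0) + (if l = j then (c x * \<beta>) *\<^sub>R xj else 0) = 0"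
        using \<open>c x = 0\<close> by simp
      with block[OF that(1)] have "(\<Sum>a\<in>T l. c a *\<^sub>R a) = 0"
        by simp
      then show "c a = 0"
        using independentD[OF _ fin[OF that(1)] order_refl] T that by blast
    qed
    then show False
      using nontrivial \<open>c x = 0\<close> by blast
  qed
  have "(\<Sum>a\<in>C. c a *\<^sub>R a) + (\<Sum>a\<in>C. (c x * \<alpha> * u a) *\<^sub>R a) = 0"
    using block[OF i] C i_neq_j u by (simp add: scaleR_sum_right)
  then show "c v = - (c x * \<alpha> * u v)" if "v \<in> C" for v
    using independent_relation_coeff[OF fin[OF i] conjunct2[OF T[OF i]]] C that by simp
  have "(\<Sum>a\<in>T j. c a *\<^sub>R a) + (\<Sum>a\<in>T j. (if a = xj then c x * \<beta> else 0) *\<^sub>R a) = 0"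
    using block[OF j] i_neq_j fin[OF j] xj_in
    by (simp add: if_distrib[of "\<lambda>t. t *\<^sub>R _"] cong: if_cong)
  then show "c xj = - (c x * \<beta>)"
    using independent_relation_coeff[OF fin[OF j] conjunct2[OF T[OF j]]] xj_in by fastforce
qed

lemma relation_two_negative:
  assumes T: "\<And>l. l < k \<Longrightarrow> T l \<subseteq> span (Xs l) \<and> independent (T l)"
    and C: "T i = C" and xj_in: "xj \<in> T j"
    and u: "xi = (\<Sum>v\<in>C. u v *\<^sub>R v)" "\<exists>v\<in>C. u v > 0" "\<exists>v\<in>C. u v < 0"
    and rel: "(\<Sum>a\<in>insert x (\<Union>l<k. T l). c a *\<^sub>R a) = 0"
    and nontrivial: "\<exists>a\<in>insert x (\<Union>l<k. T l). c a \<noteq> 0"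
  shows "\<exists>a\<in>insert x (\<Union>l<k. T l). \<exists>b\<in>insert x (\<Union>l<k. T l). a \<noteq> b \<and> c a < 0 \<and> c b < 0"
proof -
  let ?A = "insert x (\<Union>l<k. T l)"
  obtain \<alpha> \<beta> where ab: "\<alpha> > 0" "\<beta> > 0" "x = \<alpha> *\<^sub>R xi + \<beta> *\<^sub>R xj"
    using x_combination by blast
  have C_span: "C \<subseteq> span (Xs i)"
    using T[OF i] C by simp
  then have C_sub: "C \<subseteq> ?A - {x}"
    using C i x_notin_span by blast
  have xj_sub: "xj \<in> ?A - C"
    using C_span xj_notin_span_i xj_in j by blast
  note coeffs = relation_coeffs[OF _ C xj_in u(1) ab(3) rel nontrivial]
  have "c x \<noteq> 0"
    by (rule coeffs(1)) (fact T)
  have c_C: "c v = - (c x * \<alpha> * u v)" if "v \<in> C" for v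
    by (rule coeffs(2)[OF _ that]) (fact T)
  have "c xj = - (c x * \<beta>)"
    by (rule coeffs(3)) (fact T)
  show ?thesis
  proof (cases "c x < 0")
    case True
    obtain v where v: "v \<in> C" "u v < 0"
      using u(3) by blast
    have "c x * \<alpha> < 0"
      using True ab(1) by (simp add: mult_neg_pos)
    then have "c v < 0"
      using c_C[OF v(1)] v(2) by (simp add: mult_neg_neg)
    then show ?thesis
      using True v(1) C_sub by blast
  next
    case False
    with \<open>c x \<noteq> 0\<close> have "c x > 0" by simp
    obtain v where v: "v \<in> C" "u v > 0"
      using u(2) by blast
    have "c v < 0"
      using c_C[OF v(1)] v(2) \<open>c x > 0\<close> ab(1) by simp
    moreover have "c xj < 0"
      using \<open>c xj = - (c x * \<beta>)\<close> \<open>c x > 0\<close> ab(2) by simp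
    moreover have "v \<in> ?A" "xj \<in> ?A" "xj \<noteq> v"
      using v(1) C_sub xj_sub by auto
    ultimately show ?thesis
      by blast
  qed
qed

text \<open>If the coordinates of xi in C have both signs, then every nontrivial linear relation among
  these points has two negative coefficients: x and a point of C, or xj and a point of C.\<close>
lemma conical_extension:
  assumes T: "\<And>l. l < k \<Longrightarrow> T l \<subseteq> span (Xs l) \<and> independent (T l)"
    and C: "T i = C" and xj_in: "xj \<in> T j"
    and u: "xi = (\<Sum>v\<in>C. u v *\<^sub>R v)" "\<exists>v\<in>C. u v > 0" "\<exists>v\<in>C. u v < 0"
  shows "conical_position (insert x (\<Union>l<k. T l))"
proof (rule conical_position_if_two_negative)
  show "finite (insert x (\<Union>l<k. T l))"
    using T independent_imp_finite by blast
  fix c assume "(\<Sum>a\<in>insert x (\<Union>l<k. T l). c a *\<^sub>R a) = 0"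
    and "\<exists>a\<in>insert x (\<Union>l<k. T l). c a \<noteq> 0"
  from relation_two_negative[OF _ C xj_in u this]
  show "\<exists>a\<in>insert x (\<Union>l<k. T l). \<exists>b\<in>insert x (\<Union>l<k. T l). a \<noteq> b \<and> c a < 0 \<and> c b < 0"
    using T by blast
qed

lemma block_bases:
  obtains B where "\<And>l. B l \<subseteq> Xs l \<and> independent (B l) \<and> Xs l \<subseteq> span (B l)" "xj \<in> B j"
proof -
  have "\<exists>B. B \<subseteq> Xs l \<and> independent B \<and> Xs l \<subseteq> span B \<and> (l = j \<longrightarrow> xj \<in> B)" for l
  proof -
    let ?S = "if l = j then {xj} else {}"
    have "xj \<noteq> 0"
      using xj Xs_subset[OF j] zero_notin_X by blast
    then have "independent ?S"
      by (simp add: independent_insert independent_empty)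
    moreover have "?S \<subseteq> Xs l"
      using xj by simp
    ultimately obtain B where "?S \<subseteq> B" "B \<subseteq> Xs l" "independent B" "Xs l \<subseteq> span B"
      using maximal_independent_subset_extend by metis
    then show ?thesis
      by (intro exI[of _ B]) auto
  qed
  then show thesis
    using that by metis
qed

lemma no_mixed_basis:
  assumes C: "C \<subseteq> X" "C \<subseteq> span (Xs i)" "Xs i \<subseteq> span C" "card C < card (Xs i)"
    and u: "xi = (\<Sum>v\<in>C. u v *\<^sub>R v)" "\<exists>v\<in>C. u v > 0" "\<exists>v\<in>C. u v < 0"
  shows False
proof -
  have "finite C"
    using C(1) finite_X finite_subset by blast
  then have indep_C: "independent C"
    using simplex_i.independent_if_spanning C(2-4) by blast
  obtain B where B: "\<And>l. B l \<subseteq> Xs l \<and> independent (B l) \<and> Xs l \<subseteq> span (B l)"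
    and xj_in_B: "xj \<in> B j"
    using block_bases by blast
  define T where "T l = (if l = i then C else B l)" for l
  have T: "T l \<subseteq> X \<and> T l \<subseteq> span (Xs l) \<and> independent (T l) \<and> Xs l \<subseteq> span (T l)"
    if "l < k" for l
    using B[of l] C indep_C Xs_subset[OF that] span_superset[of "Xs l"] by (auto simp: T_def)
  let ?A = "insert x (\<Union>l<k. T l)"
  have D: "independent (\<Union>l<k. T l)" "card (\<Union>l<k. T l) = DIM('a)"
    using skeleton_union_basis[OF skeleton, of T] T by simp_all
  have "x \<notin> (\<Union>l<k. T l)"
    using T x_notin_span by blast
  then have "card ?A = DIM('a) + 1"
    using D independent_imp_finite[OF D(1)] by simp
  moreover have "?A \<subseteq> X"
    using T x_in_X by blast
  ultimately have "good_position ?A"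
    using standing by (simp add: standing_def)
  moreover have "conical_position ?A"
    by (rule conical_extension[OF _ _ _ u]) (use T xj_in_B i_neq_j in \<open>auto simp: T_def\<close>)
  ultimately show False
    by (simp add: good_position_def)
qed


lemma no_mixed_representation:
  assumes Y: "Y \<subseteq> X \<inter> span (Xs i)" "finite Y" "Y \<inter> Xs i = {}"
    and D: "xi \<in> D" "D \<subseteq> Xs i" "card Y < card D" "D - {xi, b} \<subseteq> span (Y \<union> (Xs i - D))"
    and repr: "xi = (\<Sum>v\<in>Y. u v *\<^sub>R v) + (\<Sum>v\<in>Xs i - D. f v *\<^sub>R v)"
    and signs: "y \<in> Y" "e \<in> Xs i - D" "u y * f e < 0"
  shows False
proof -
  let ?C = "Y \<union> (Xs i - D)"
  define g where "g v = (if v \<in> Y then u v else f v)" for v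
  have disj: "Y \<inter> (Xs i - D) = {}"
    using Y(3) by blast
  have fin: "finite (Xs i - D)"
    using simplex_i.finite by simp
  have "xi = (\<Sum>v\<in>Y. g v *\<^sub>R v) + (\<Sum>v\<in>Xs i - D. g v *\<^sub>R v)"
    unfolding repr g_def using disj by (auto intro!: sum.cong arg_cong2[where f = "(+)"])
  then have repr_C: "xi = (\<Sum>v\<in>?C. g v *\<^sub>R v)"
    using sum.union_disjoint[OF Y(2) fin disj, of "\<lambda>v. g v *\<^sub>R v"] by simp
  show False
  proof (rule no_mixed_basis[OF _ _ _ _ repr_C])
    show "?C \<subseteq> X" "?C \<subseteq> span (Xs i)"
      using Y(1) Xs_subset[OF i] span_superset by auto
    have "xi \<in> span ?C"
      by (subst repr_C) (intro span_sum span_scale span_base; auto)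
    then have "Xs i - {b} \<subseteq> span ?C"
      using D(4) by (auto intro: span_base)
    then show "Xs i \<subseteq> span ?C"
      using simplex_i.span_remove[of b] span_mono span_span by blast
    have "card ?C = card Y + (card (Xs i) - card D)"
      using card_Un_disjoint[OF Y(2) fin disj] card_Diff_subset[OF finite_subset[OF D(2)] D(2)]
        simplex_i.finite by simp
    moreover have "card D \<le> card (Xs i)"
      using card_mono[OF simplex_i.finite D(2)] .
    ultimately show "card ?C < card (Xs i)"
      using D(3) by linarith
    have "y \<in> ?C" "e \<in> ?C" "g y = u y" "g e = f e"
      using signs Y(3) by (auto simp: g_def)
    moreover have "(u y > 0 \<and> f e < 0) \<or> (u y < 0 \<and> f e > 0)"
      using signs(3) by (simp add: mult_less_0_iff)
    ultimately show "\<exists>v\<in>?C. g v > 0" "\<exists>v\<in>?C. g v < 0"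
      by metis+
  qed
qed

lemma xi_notin_support:
  assumes y: "y \<in> X \<inter> span (Xs i)" and S: "is_support (Xs i) y S"
    and s: "s \<in> S" "s' \<in> S" "s \<noteq> s'"
  shows "xi \<notin> S"
proof
  assume xi_S: "xi \<in> S"
  have SE: "S \<subseteq> Xs i"
    using is_support_subset[OF S] .
  obtain w where w: "\<forall>e\<in>S. w e > 0" "y = (\<Sum>e\<in>S. w e *\<^sub>R e)" "S \<noteq> Xs i"
    using simplex_i.support_coeffs[OF _ S] y zero_notin_X by blast
  obtain b where b: "b \<in> Xs i" "b \<notin> S"
    using w(3) SE by blast
  obtain e0 where e0: "e0 \<in> S" "e0 \<noteq> xi"
    using s by blast
  have "xi \<noteq> b"
    using xi_S b by blast
  have "y \<notin> Xs i"
    using simplex_i.positive_combination_notin[OF SE w(2) w(1) _ _ b] s by blast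
  have repr: "xi = (\<Sum>v\<in>{y}. inverse (w xi) *\<^sub>R v)
      + (\<Sum>v\<in>Xs i - {xi, b}. (- (if v \<in> S then inverse (w xi) * w v else 0)) *\<^sub>R v)"
    using simplex_i.vertex_expansion_in_support[OF SE xi_S b(2) w(2)] w(1) xi_S
    by (simp add: less_imp_neq[symmetric])
  have sign: "inverse (w xi) * - (if e0 \<in> S then inverse (w xi) * w e0 else 0) < 0"
    using w(1) xi_S e0(1) by (simp add: mult_pos_neg)
  show False
    by (rule no_mixed_representation[where D = "{xi, b}", OF _ _ _ _ _ _ _ repr _ _ sign])
      (use y \<open>y \<notin> Xs i\<close> \<open>xi \<noteq> b\<close> xi b e0 SE in auto)
qed

lemma support_weights_le:
  assumes y: "y \<in> X \<inter> span (Xs i)" and S: "is_support (Xs i) y S"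
    and w: "\<forall>e\<in>S. w e > 0" "y = (\<Sum>e\<in>S. w e *\<^sub>R e)" and b: "b \<in> S" and e0: "e0 \<in> S"
  shows "w e0 \<le> w b"
proof (rule ccontr)
  assume "\<not> w e0 \<le> w b"
  then have "w b < w e0" "e0 \<noteq> b"
    by auto
  have SE: "S \<subseteq> Xs i"
    using is_support_subset[OF S] .
  have xi_S: "xi \<notin> S"
    using xi_notin_support[OF y S e0 b] \<open>e0 \<noteq> b\<close> by blast
  have "y \<notin> Xs i"
    using simplex_i.positive_combination_notin[OF SE w(2) w(1) _ _ xi xi_S] e0 b \<open>e0 \<noteq> b\<close> by metis
  have "xi \<noteq> b"
    using xi_S b by blast
  have repr: "xi = (\<Sum>v\<in>{y}. (- inverse (w b)) *\<^sub>R v)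
      + (\<Sum>v\<in>Xs i - {xi, b}. ((if v \<in> S then inverse (w b) * w v else 0) - 1) *\<^sub>R v)"
    using simplex_i.vertex_expansion_off_support[OF SE xi xi_S b w(2)] w(1) b
    by (simp add: less_imp_neq[symmetric])
  have "inverse (w b) * w e0 > 1"
    using \<open>w b < w e0\<close> w(1) b by (simp add: field_simps)
  then have sign: "- inverse (w b) * ((if e0 \<in> S then inverse (w b) * w e0 else 0) - 1) < 0"
    using w(1) b e0 by (simp add: mult_neg_pos)
  show False
    by (rule no_mixed_representation[where D = "{xi, b}", OF _ _ _ _ _ _ _ repr _ _ sign])
      (use y \<open>y \<notin> Xs i\<close> \<open>xi \<noteq> b\<close> \<open>e0 \<noteq> b\<close> xi b e0 SE xi_S in auto)
qed

lemma support_positive_multiple: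
  assumes y: "y \<in> X \<inter> span (Xs i)" and S: "is_support (Xs i) y S"
  shows "\<exists>c>0. y = c *\<^sub>R (\<Sum>e\<in>S. e)"
proof -
  obtain w where w: "\<forall>e\<in>S. w e > 0" "y = (\<Sum>e\<in>S. w e *\<^sub>R e)"
    using simplex_i.support_coeffs[OF _ S] y zero_notin_X by blast
  have "S \<noteq> {}"
    using w(2) y zero_notin_X by auto
  then obtain b where b: "b \<in> S"
    by blast
  have "w e = w b" if "e \<in> S" for e
    using support_weights_le[OF y S w b that] support_weights_le[OF y S w that b] by simp
  then have "y = w b *\<^sub>R (\<Sum>e\<in>S. e)"
    unfolding w(2) scaleR_sum_right by (intro sum.cong) auto
  then show ?thesis
    using w(1) b by blast
qed

lemma supports_laminar:
  assumes p: "p \<in> X \<inter> span (Xs i)" "is_support (Xs i) p Sp"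
    and q: "q \<in> X \<inter> span (Xs i)" "is_support (Xs i) q Sq"
  shows "Sp \<inter> Sq = {} \<or> Sp \<subseteq> Sq \<or> Sq \<subseteq> Sp"
proof (rule ccontr)
  assume "\<not> (Sp \<inter> Sq = {} \<or> Sp \<subseteq> Sq \<or> Sq \<subseteq> Sp)"
  then obtain s a b where s: "s \<in> Sp" "s \<in> Sq" and a: "a \<in> Sp" "a \<notin> Sq"
    and b: "b \<in> Sq" "b \<notin> Sp"
    by blast
  have Sp: "Sp \<subseteq> Xs i" and Sq: "Sq \<subseteq> Xs i"
    using is_support_subset p(2) q(2) by blast+
  have xi_Sp: "xi \<notin> Sp" and xi_Sq: "xi \<notin> Sq"
    using xi_notin_support[OF p a(1) s(1)] xi_notin_support[OF q b(1) s(2)] a b s by auto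
  obtain \<mu> where \<mu>: "\<mu> > 0" "p = \<mu> *\<^sub>R (\<Sum>e\<in>Sp. e)"
    using support_positive_multiple[OF p] by blast
  obtain \<nu> where \<nu>: "\<nu> > 0" "q = \<nu> *\<^sub>R (\<Sum>e\<in>Sq. e)"
    using support_positive_multiple[OF q] by blast
  have "a \<noteq> s" "b \<noteq> s"
    using a b s by auto
  then have pq_notin: "p \<notin> Xs i" "q \<notin> Xs i"
    using simplex_i.scaled_face_sum_notin[OF Sp xi xi_Sp a(1) s(1) _ \<mu>(1)]
      simplex_i.scaled_face_sum_notin[OF Sq xi xi_Sq b(1) s(2) _ \<nu>(1)] \<mu>(2) \<nu>(2) by auto
  have "p \<noteq> q"
    using simplex_i.scaled_face_sums_eq_imp_subset[OF Sp Sq xi xi_Sp xi_Sq] \<mu> \<nu> a by auto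
  have repr: "xi = (\<Sum>v\<in>{p, q}. (if v = p then - inverse \<mu> else - inverse \<nu>) *\<^sub>R v)
      + (\<Sum>v\<in>Xs i - {xi, a, b}.
          ((if v \<in> Sp then 1 else 0) + (if v \<in> Sq then 1 else 0) - 1) *\<^sub>R v)"
    using simplex_i.vertex_expansion_off_crossing[OF Sp Sq xi xi_Sp xi_Sq a b] \<mu> \<nu> \<open>p \<noteq> q\<close>
    by simp
  have sign: "(if p = p then - inverse \<mu> else - inverse \<nu>)
      * ((if s \<in> Sp then 1 else 0) + (if s \<in> Sq then 1 else 0) - 1) < 0"
    using \<mu>(1) s by simp
  have a_span: "a \<in> span ({p, q} \<union> (Xs i - {xi, a, b}))"
  proof (rule vertex_in_span_if_scaled_sum[OF finite_subset[OF Sp simplex_i.finite] a(1)])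
    show "\<mu> \<noteq> 0" "\<mu> *\<^sub>R (\<Sum>e\<in>Sp. e) \<in> span ({p, q} \<union> (Xs i - {xi, a, b}))"
      using \<mu> by (auto intro: span_base)
    show "Sp - {a} \<subseteq> span ({p, q} \<union> (Xs i - {xi, a, b}))"
      using Sp xi_Sp b by (auto intro: span_base)
  qed
  have "xi \<noteq> a" "xi \<noteq> b" "a \<noteq> b"
    using a b xi_Sp xi_Sq by blast+
  then have "card {xi, a, b} = 3"
    by simp
  show False
    by (rule no_mixed_representation[where D = "{xi, a, b}" and b = b,
          OF _ _ _ _ _ _ _ repr _ _ sign])
      (use p q pq_notin \<open>p \<noteq> q\<close> xi a b s Sp Sq xi_Sp xi_Sq a_span
        \<open>card {xi, a, b} = 3\<close> in auto)
qed

end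

theorem proposition5p5:
  fixes X :: "'a::euclidean_space set" and k :: nat and Xs :: "nat \<Rightarrow> 'a set"
    and x xi xj :: 'a and i j :: nat
  assumes "standing X"
    and "skeleton X k Xs"
    and "\<forall>l<k. (\<Sum>e\<in>Xs l. e) = 0"
    and "x \<in> X" and "\<forall>l<k. x \<notin> span (Xs l)"
    and "i < k" and "j < k" and "i \<noteq> j"
    and "xi \<in> Xs i" and "xj \<in> Xs j" and "x \<in> pos {xi, xj}"
  shows "(\<forall>y\<in>X \<inter> span (Xs i). \<forall>S. is_support (Xs i) y S \<longrightarrow>
            (\<exists>c::real. c > 0 \<and> y = c *\<^sub>R (\<Sum>e\<in>S. e)))
       \<and> (\<forall>p\<in>X \<inter> span (Xs i). \<forall>q\<in>X \<inter> span (Xs i). \<forall>Sp Sq.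
            is_support (Xs i) p Sp \<and> is_support (Xs i) q Sq \<longrightarrow>
            Sp \<inter> Sq = {} \<or> Sp \<subseteq> Sq \<or> Sq \<subseteq> Sp)"
proof -
  interpret bridged_skeleton X k Xs x xi xj i j
    by (rule bridged_skeleton.intro) (fact assms)+
  show ?thesis
    using support_positive_multiple supports_laminar by blast
qed

end
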